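(* (1) The sets $A$, $A+A$ and $A\times A$ are infinite, but none of them is FSM Mostowski infinite and none is FSM Tarski II infinite. (2) None of $\wp_{fin}(A)$, $\wp_{cofin}(A)$, $\wp_{fs}(A)$, $\wp_{fin}(\wp_{fs}(A))$ is FSM Mostowski infinite. (3) None of $A^A_{fs}$, $T_{fin}(A)^A_{fs}$, $\wp_{fs}(A)^A_{fs}$ is FSM Mostowski infinite.
   Context: Framework (FSM). Work in ZF with a fixed infinite set $A$ of atoms; $S_A$ is the group of bijections of $A$ fixing all but finitely many atoms, acting on $A$ by evaluation; $Fix(S)$ is the set of $\pi\in S_A$ fixing each element of $S\subseteq A$; $S$ supports $x$ if $\pi\cdot x=x$ for all $\pi\in Fix(S)$. Products carry the componentwise action; $X+Y=\{(0,x):x\in X\}\cup\{(1,y):y\in Y\}$ with $\pi\cdot(i,z)=(i,\pi\cdot z)$; subsets carry $\pi\star W=\{\pi\cdot w:w\in W\}$. $\wp_{fs}(A)$: finitely supported subsets of $A$; $\wp_{fin}$: finite subsets; $\wp_{cofin}(A)$: cofinite subsets of $A$; $T_{fin}(A)$: finite injective tuples of atoms with componentwise action. For sets $X,Y$, $Y^X_{fs}$ is the set of finitely supported functions $X\to Y$ (functions $f$ for which some finite $S$ gives $f(\pi\cdot x)=\pi\cdot f(x)$ for all $\pi\in Fix(S)$), with action $(\pi\cdot f)(x)=\pi\cdot f(\pi^{-1}\cdot x)$. $X$ is FSM Mostowski infinite if there exist an infinite finitely supported subset $Y\subseteq X$ and a finitely supported total order on $Y$. $X$ is FSM Tarski II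 infinite if there is a nonempty finitely supported family of finitely supported subsets of $X$ that is totally ordered by inclusion and has no maximal element. *)

theory Defs
  imports Main
begin

text \<open>Atoms are the elements of a type 'a (assumed infinite in the theorem).
  S_A: bijections of the atoms moving only finitely many atoms.\<close>

definition perm_fin :: "('a \<Rightarrow> 'a) \<Rightarrow> bool" where
  "perm_fin \<pi> \<longleftrightarrow> bij \<pi> \<and> finite {a. \<pi> a \<noteq> a}"

definition Fix :: "'a set \<Rightarrow> ('a \<Rightarrow> 'a) set" where
  "Fix S = {\<pi>. perm_fin \<pi> \<and> (\<forall>a\<in>S. \<pi> a = a)}"

definition supports :: "(('a \<Rightarrow> 'a) \<Rightarrow> 'b \<Rightarrow> 'b) \<Rightarrow> 'a set \<Rightarrow> 'b \<Rightarrow> bool" where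
  "supports act S x \<longleftrightarrow> (\<forall>\<pi>\<in>Fix S. act \<pi> x = x)"

definition fin_supp :: "(('a \<Rightarrow> 'a) \<Rightarrow> 'b \<Rightarrow> 'b) \<Rightarrow> 'b \<Rightarrow> bool" where
  "fin_supp act x \<longleftrightarrow> (\<exists>S. finite S \<and> supports act S x)"

definition atom_act :: "('a \<Rightarrow> 'a) \<Rightarrow> 'a \<Rightarrow> 'a" where
  "atom_act \<pi> a = \<pi> a"

definition prod_act :: "(('a \<Rightarrow> 'a) \<Rightarrow> 'b \<Rightarrow> 'b) \<Rightarrow> (('a \<Rightarrow> 'a) \<Rightarrow> 'c \<Rightarrow> 'c)
    \<Rightarrow> ('a \<Rightarrow> 'a) \<Rightarrow> 'b \<times> 'c \<Rightarrow> 'b \<times> 'c" where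
  "prod_act act1 act2 \<pi> p = (act1 \<pi> (fst p), act2 \<pi> (snd p))"

text \<open>Disjoint union X+Y, modelled by the sum type (Inl = tag 0, Inr = tag 1).\<close>
definition sum_act :: "(('a \<Rightarrow> 'a) \<Rightarrow> 'b \<Rightarrow> 'b) \<Rightarrow> (('a \<Rightarrow> 'a) \<Rightarrow> 'c \<Rightarrow> 'c)
    \<Rightarrow> ('a \<Rightarrow> 'a) \<Rightarrow> 'b + 'c \<Rightarrow> 'b + 'c" where
  "sum_act act1 act2 \<pi> z = map_sum (act1 \<pi>) (act2 \<pi>) z"

definition set_act :: "(('a \<Rightarrow> 'a) \<Rightarrow> 'b \<Rightarrow> 'b) \<Rightarrow> ('a \<Rightarrow> 'a) \<Rightarrow> 'b set \<Rightarrow> 'b set" where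
  "set_act act \<pi> W = act \<pi> ` W"

text \<open>Finite injective tuples of atoms: distinct lists, componentwise action.\<close>
definition tuple_act :: "('a \<Rightarrow> 'a) \<Rightarrow> 'a list \<Rightarrow> 'a list" where
  "tuple_act \<pi> xs = map \<pi> xs"

definition fun_act :: "(('a \<Rightarrow> 'a) \<Rightarrow> 'b \<Rightarrow> 'b) \<Rightarrow> (('a \<Rightarrow> 'a) \<Rightarrow> 'c \<Rightarrow> 'c)
    \<Rightarrow> ('a \<Rightarrow> 'a) \<Rightarrow> ('b \<Rightarrow> 'c) \<Rightarrow> ('b \<Rightarrow> 'c)" where
  "fun_act actX actY \<pi> f = (\<lambda>x. actY \<pi> (f (actX (inv \<pi>) x)))"

definition fs_funs :: "'b set \<Rightarrow> (('a \<Rightarrow> 'a) \<Rightarrow> 'b \<Rightarrow> 'b) \<Rightarrow> 'c set \<Rightarrow> (('a \<Rightarrow> 'a) \<Rightarrow> 'c \<Rightarrow> 'c)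
    \<Rightarrow> ('b \<Rightarrow> 'c) set" where
  "fs_funs X actX Y actY = {f. (\<forall>x\<in>X. f x \<in> Y) \<and>
      (\<exists>S. finite S \<and> (\<forall>\<pi>\<in>Fix S. \<forall>x\<in>X. f (actX \<pi> x) = actY \<pi> (f x)))}"

definition pfs_A :: "'a set set" where
  "pfs_A = {W. fin_supp (set_act atom_act) W}"

definition pfin :: "'b set \<Rightarrow> 'b set set" where
  "pfin X = {W. W \<subseteq> X \<and> finite W}"

definition pcofin_A :: "'a set set" where
  "pcofin_A = {W. finite (- W)}"

definition Tfin_A :: "'a list set" where
  "Tfin_A = {xs. distinct xs}"

definition FSM_Mostowski_infinite :: "(('a \<Rightarrow> 'a) \<Rightarrow> 'b \<Rightarrow> 'b) \<Rightarrow> 'b set \<Rightarrow> bool" where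
  "FSM_Mostowski_infinite act X \<longleftrightarrow>
     (\<exists>Y r. Y \<subseteq> X \<and> infinite Y \<and> fin_supp (set_act act) Y \<and>
        linear_order_on Y r \<and> fin_supp (set_act (prod_act act act)) r)"

definition FSM_Tarski_II_infinite :: "(('a \<Rightarrow> 'a) \<Rightarrow> 'b \<Rightarrow> 'b) \<Rightarrow> 'b set \<Rightarrow> bool" where
  "FSM_Tarski_II_infinite act X \<longleftrightarrow>
     (\<exists>\<F>. \<F> \<noteq> {} \<and> fin_supp (set_act (set_act act)) \<F> \<and>
        (\<forall>W\<in>\<F>. W \<subseteq> X \<and> fin_supp (set_act act) W) \<and>
        (\<forall>U\<in>\<F>. \<forall>V\<in>\<F>. U \<subseteq> V \<or> V \<subseteq> U) \<and>
        (\<forall>U\<in>\<F>. \<exists>V\<in>\<F>. U \<subset> V))"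

end

theory Submission
  imports Defs "HOL-Combinatorics.Transposition" "HOL-Library.FuncSet"
begin

text \<open>Let Y be finitely supported and carry a finitely supported total order, and let S support
  both. A transposition of two atoms outside S maps Y onto itself, preserves the order and is an
  involution; as it cannot exchange two comparable elements, it fixes Y pointwise. The same holds
  for a finitely supported chain of subsets ordered by inclusion. So it suffices that only finitely
  many elements (resp. subsets) are invariant under all transpositions outside a finite set S,
  which is checked for each of the sets in question.\<close>

definition swap_supports :: "(('a \<Rightarrow> 'a) \<Rightarrow> 'b \<Rightarrow> 'b) \<Rightarrow> 'a set \<Rightarrow> 'b \<Rightarrow> bool" where
  "swap_supports act S x \<longleftrightarrow> (\<forall>a b. a \<notin> S \<longrightarrow> b \<notin> S \<longrightarrow> act (transpose a b) x = x)"

definition swap_involutive :: "(('a \<Rightarrow> 'a) \<Rightarrow> 'b \<Rightarrow> 'b) \<Rightarrow> bool" where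
  "swap_involutive act \<longleftrightarrow> (\<forall>a b x. act (transpose a b) (act (transpose a b) x) = x)"

lemma swap_involutive_atom_act: "swap_involutive atom_act"
  by (simp add: swap_involutive_def atom_act_def)

lemma swap_involutive_sum_act:
  "swap_involutive act1 \<Longrightarrow> swap_involutive act2 \<Longrightarrow> swap_involutive (sum_act act1 act2)"
  unfolding swap_involutive_def sum_act_def by (intro allI, case_tac x) simp_all

lemma swap_involutive_prod_act:
  "swap_involutive act1 \<Longrightarrow> swap_involutive act2 \<Longrightarrow> swap_involutive (prod_act act1 act2)"
  unfolding swap_involutive_def prod_act_def by simp

lemma swap_involutive_set_act: "swap_involutive act \<Longrightarrow> swap_involutive (set_act act)"
  unfolding swap_involutive_def set_act_def by (simp add: image_image)

lemma swap_involutive_tuple_act: "swap_involutive tuple_act"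
  unfolding swap_involutive_def tuple_act_def by (simp add: map_idI)

lemma swap_involutive_fun_act: "swap_involutive act \<Longrightarrow> swap_involutive (fun_act atom_act act)"
  unfolding swap_involutive_def fun_act_def atom_act_def by simp

lemma transpose_in_Fix:
  assumes "a \<notin> S" "b \<notin> S"
  shows "transpose a b \<in> Fix S"
proof -
  have "finite {x. transpose a b x \<noteq> x}"
    by (rule finite_subset[of _ "{a, b}"]) (auto simp: transpose_def)
  then show ?thesis using assms by (auto simp: Fix_def perm_fin_def transpose_def)
qed

lemma supports_imp_swap_supports: "supports act S x \<Longrightarrow> swap_supports act S x"
  by (simp add: supports_def swap_supports_def transpose_in_Fix)

lemma fixed_by_order_preserving_involution:
  assumes "total_on Y r" "antisym r" "y \<in> Y" "f y \<in> Y" "f (f y) = y"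
    and "\<And>u v. (u, v) \<in> r \<Longrightarrow> (f u, f v) \<in> r"
  shows "f y = y"
proof (rule ccontr)
  assume "f y \<noteq> y"
  then have "(y, f y) \<in> r \<or> (f y, y) \<in> r" using assms(1,3,4) by (auto simp: total_on_def)
  then have "(y, f y) \<in> r \<and> (f y, y) \<in> r" using assms(5,6) by metis
  then show False using \<open>f y \<noteq> y\<close> assms(2) by (auto simp: antisym_def)
qed

lemma not_FSM_Mostowski_infinite:
  assumes inv: "swap_involutive act"
    and fin: "\<And>S. finite S \<Longrightarrow> finite {x \<in> X. swap_supports act S x}"
  shows "\<not> FSM_Mostowski_infinite act X"
proof
  assume "FSM_Mostowski_infinite act X"
  then obtain Y r S1 S2 where Y: "Y \<subseteq> X" "infinite Y" and r: "linear_order_on Y r"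
    and S: "finite S1" "supports (set_act act) S1 Y" "finite S2" "supports (set_act (prod_act act act)) S2 r"
    unfolding FSM_Mostowski_infinite_def fin_supp_def by blast
  have "swap_supports act (S1 \<union> S2) y" if "y \<in> Y" for y
    unfolding swap_supports_def
  proof (intro allI impI)
    fix a b assume "a \<notin> S1 \<union> S2" "b \<notin> S1 \<union> S2"
    let ?f = "act (transpose a b)"
    have "set_act act (transpose a b) Y = Y" "set_act (prod_act act act) (transpose a b) r = r"
      using \<open>a \<notin> S1 \<union> S2\<close> \<open>b \<notin> S1 \<union> S2\<close> S(2,4)[THEN supports_imp_swap_supports]
      by (simp_all add: swap_supports_def)
    then have "?f y \<in> Y" and "\<And>u v. (u, v) \<in> r \<Longrightarrow> (?f u, ?f v) \<in> r"
      using \<open>y \<in> Y\<close> unfolding set_act_def prod_act_def by (auto intro!: rev_image_eqI)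
    moreover have "total_on Y r" "antisym r"
      using r by (simp_all add: linear_order_on_def partial_order_on_def)
    moreover have "?f (?f y) = y" using inv by (simp add: swap_involutive_def)
    ultimately show "?f y = y"
      using \<open>y \<in> Y\<close> by (metis fixed_by_order_preserving_involution)
  qed
  then have "Y \<subseteq> {x \<in> X. swap_supports act (S1 \<union> S2) x}" using Y(1) by blast
  then show False using fin S(1,3) Y(2) by (meson finite_UnI finite_subset)
qed

lemma not_FSM_Tarski_II_infinite:
  assumes inv: "swap_involutive act"
    and fin: "\<And>S. finite S \<Longrightarrow> finite {W. W \<subseteq> X \<and> swap_supports (set_act act) S W}"
  shows "\<not> FSM_Tarski_II_infinite act X"
proof
  assume "FSM_Tarski_II_infinite act X"
  then obtain F S where F: "F \<noteq> {}" "\<forall>W\<in>F. W \<subseteq> X" "\<forall>U\<in>F. \<forall>V\<in>F. U \<subseteq> V \<or> V \<subseteq> U"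
      "\<forall>U\<in>F. \<exists>V\<in>F. U \<subset> V"
    and S: "finite S" "supports (set_act (set_act act)) S F"
    unfolding FSM_Tarski_II_infinite_def fin_supp_def by (elim exE conjE) (rule that; blast)
  have "swap_supports (set_act act) S W" if "W \<in> F" for W
    unfolding swap_supports_def
  proof (intro allI impI)
    fix a b assume "a \<notin> S" "b \<notin> S"
    let ?f = "set_act act (transpose a b)"
    have closed: "?f ` F = F"
      using \<open>a \<notin> S\<close> \<open>b \<notin> S\<close> S(2)[THEN supports_imp_swap_supports]
      by (simp add: swap_supports_def set_act_def[of "set_act act"])
    have mono: "?f U \<subseteq> ?f V" if "U \<subseteq> V" for U V using that by (auto simp: set_act_def)
    show "?f W = W"
    proof (rule fixed_by_order_preserving_involution[of F "{(U, V). U \<subseteq> V}"])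
      show "total_on F {(U, V). U \<subseteq> V}" using F(3) by (auto simp: total_on_def)
      show "?f (?f W) = W" using swap_involutive_set_act[OF inv] by (simp add: swap_involutive_def)
    qed (use \<open>W \<in> F\<close> closed mono in \<open>auto simp: antisym_def\<close>)
  qed
  then have "F \<subseteq> {W. W \<subseteq> X \<and> swap_supports (set_act act) S W}" using F(2) by blast
  then have "finite F" using fin[OF S(1)] by (rule finite_subset)
  then obtain M where "M \<in> F" "\<forall>V\<in>F. M \<subseteq> V \<longrightarrow> M = V"
    using finite_has_maximal[OF _ F(1)] by blast
  then show False using F(4) by blast
qed

lemma swap_supports_set_act_mem:
  assumes "swap_involutive act" "swap_supports (set_act act) S W" "a \<notin> S" "b \<notin> S"
  shows "act (transpose a b) e \<in> W \<longleftrightarrow> e \<in> W"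
proof -
  have "act (transpose a b) ` W = W"
    using assms(2-4) by (simp add: swap_supports_def set_act_def)
  moreover have "act (transpose a b) (act (transpose a b) e) = e"
    using assms(1) by (simp add: swap_involutive_def)
  ultimately show ?thesis by (metis imageI)
qed

lemma finite_family_determined_on_finite_set:
  assumes "finite K" "\<And>e. \<exists>k\<in>K. \<forall>W\<in>\<W>. e \<in> W \<longleftrightarrow> k \<in> W"
  shows "finite \<W>"
proof -
  have "inj_on (\<lambda>W. W \<inter> K) \<W>"
  proof (rule inj_onI)
    fix U V assume UV: "U \<in> \<W>" "V \<in> \<W>" "U \<inter> K = V \<inter> K"
    show "U = V"
    proof (rule set_eqI)
      fix e
      obtain k where "k \<in> K" "\<forall>W\<in>\<W>. e \<in> W \<longleftrightarrow> k \<in> W" using assms(2) by blast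
      with UV show "e \<in> U \<longleftrightarrow> e \<in> V" by blast
    qed
  qed
  moreover have "(\<lambda>W. W \<inter> K) ` \<W> \<subseteq> Pow K" by blast
  ultimately show ?thesis using assms(1) by (meson finite_Pow_iff finite_imageD finite_subset)
qed

lemma finite_swap_supported_elements:
  assumes "finite {W. swap_supports (set_act act) S W}"
  shows "finite {x. swap_supports act S x}"
proof (rule finite_imageD)
  show "finite ((\<lambda>x. {x}) ` {x. swap_supports act S x})"
    by (rule finite_subset[OF _ assms]) (auto simp: swap_supports_def set_act_def)
qed (simp add: inj_on_def)

lemma transpose_fresh_into:
  assumes "x \<notin> T"
  shows "transpose (if p \<in> T then x else p) x p \<in> insert x T"
    and "z \<in> T \<Longrightarrow> transpose (if p \<in> T then x else p) x z = z"
  using assms by (auto simp: transpose_def)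

lemma finite_swap_supported_atom_sets:
  assumes "infinite (UNIV :: 'a set)" "finite S"
  shows "finite {W :: 'a set. swap_supports (set_act atom_act) S W}"
proof -
  obtain x :: 'a where x: "x \<notin> S" using ex_new_if_finite assms by blast
  show ?thesis
  proof (rule finite_family_determined_on_finite_set[of "insert x S"])
    fix p
    define a where "a = (if p \<in> S then x else p)"
    have "a \<notin> S" using x unfolding a_def by auto
    then have "\<forall>W \<in> {W. swap_supports (set_act atom_act) S W}. p \<in> W \<longleftrightarrow> transpose a x p \<in> W"
      using swap_supports_set_act_mem[OF swap_involutive_atom_act _ _ x] by (simp add: atom_act_def)
    moreover have "transpose a x p \<in> insert x S"
      unfolding a_def by (fact transpose_fresh_into(1)[OF x])
    ultimately show "\<exists>k\<in>insert x S. \<forall>W \<in> {W. swap_supports (set_act atom_act) S W}. p \<in> W \<longleftrightarrow> k \<in> W"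
      by blast
  qed (simp add: assms)
qed

lemma finite_swap_supported_sum_sets:
  assumes "infinite (UNIV :: 'a set)" "finite S"
  shows "finite {W :: ('a + 'a) set. swap_supports (set_act (sum_act atom_act atom_act)) S W}"
proof -
  obtain x :: 'a where x: "x \<notin> S" using ex_new_if_finite assms by blast
  let ?K = "Inl ` insert x S \<union> Inr ` insert x S"
  let ?act = "sum_act atom_act atom_act"
  show ?thesis
  proof (rule finite_family_determined_on_finite_set[of ?K])
    fix e :: "'a + 'a"
    let ?a = "\<lambda>p. if p \<in> S then x else p"
    have "\<exists>a. a \<notin> S \<and> ?act (transpose a x) e \<in> ?K"
    proof (cases e)
      case (Inl p)
      then show ?thesis using transpose_fresh_into(1)[OF x, of p] x
        by (intro exI[of _ "?a p"]) (simp add: sum_act_def atom_act_def)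
    next
      case (Inr p)
      then show ?thesis using transpose_fresh_into(1)[OF x, of p] x
        by (intro exI[of _ "?a p"]) (simp add: sum_act_def atom_act_def)
    qed
    then obtain a where "a \<notin> S" "?act (transpose a x) e \<in> ?K" by blast
    moreover have "\<forall>W \<in> {W. swap_supports (set_act ?act) S W}. e \<in> W \<longleftrightarrow> ?act (transpose a x) e \<in> W"
      using swap_supports_set_act_mem[OF swap_involutive_sum_act[OF swap_involutive_atom_act
          swap_involutive_atom_act] _ \<open>a \<notin> S\<close> x] by simp
    ultimately show "\<exists>k\<in>?K. \<forall>W \<in> {W. swap_supports (set_act ?act) S W}. e \<in> W \<longleftrightarrow> k \<in> W"
      by blast
  qed (simp add: assms)
qed

text \<open>Two transpositions outside S move any pair of atoms into a fixed finite square.\<close>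

lemma finite_swap_supported_prod_sets:
  assumes "infinite (UNIV :: 'a set)" "finite S"
  shows "finite {W :: ('a \<times> 'a) set. swap_supports (set_act (prod_act atom_act atom_act)) S W}"
proof -
  obtain x :: 'a where x: "x \<notin> S" using ex_new_if_finite assms by blast
  obtain y :: 'a where y: "y \<notin> insert x S" using ex_new_if_finite assms by (meson finite_insert)
  let ?K = "insert y (insert x S) \<times> insert y (insert x S)"
  let ?act = "prod_act atom_act atom_act"
  have inv: "swap_involutive ?act"
    by (simp add: swap_involutive_prod_act swap_involutive_atom_act)
  show ?thesis
  proof (rule finite_family_determined_on_finite_set[of ?K])
    fix e :: "'a \<times> 'a"
    obtain p q where e: "e = (p, q)" by fastforce
    define a where "a = (if p \<in> S then x else p)"
    define q' where "q' = transpose a x q"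
    define c where "c = (if q' \<in> insert x S then y else q')"
    have p': "transpose a x p \<in> insert x S"
      unfolding a_def by (fact transpose_fresh_into(1)[OF x])
    have "transpose c y q' \<in> insert y (insert x S)"
      unfolding c_def by (fact transpose_fresh_into(1)[OF y])
    moreover have "transpose c y (transpose a x p) = transpose a x p"
      unfolding c_def by (rule transpose_fresh_into(2)[OF y p'])
    ultimately have "(transpose c y (transpose a x p), transpose c y q') \<in> ?K" using p' by auto
    then have "?act (transpose c y) (?act (transpose a x) e) \<in> ?K"
      unfolding e q'_def prod_act_def atom_act_def by simp
    moreover have "e \<in> W \<longleftrightarrow> ?act (transpose c y) (?act (transpose a x) e) \<in> W"
      if "swap_supports (set_act ?act) S W" for W
    proof -
      have "a \<notin> S" "c \<notin> S" "y \<notin> S" using x y unfolding a_def c_def by auto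
      then show ?thesis
        using swap_supports_set_act_mem[OF inv that \<open>a \<notin> S\<close> x]
          swap_supports_set_act_mem[OF inv that \<open>c \<notin> S\<close> \<open>y \<notin> S\<close>] by simp
    qed
    ultimately show "\<exists>k\<in>?K. \<forall>W \<in> {W. swap_supports (set_act ?act) S W}. e \<in> W \<longleftrightarrow> k \<in> W"
      by (intro bexI[of _ "?act (transpose c y) (?act (transpose a x) e)"]) simp_all
  qed (simp add: assms)
qed

lemma inj_on_transpose_image:
  assumes "\<forall>c\<in>C. c \<in> W \<longleftrightarrow> P" "b \<in> W \<longleftrightarrow> \<not> P" "b \<notin> C"
  shows "inj_on (\<lambda>c. transpose b c ` W) C"
proof (rule inj_onI, rule ccontr)
  fix c c' assume c: "c \<in> C" "c' \<in> C" "transpose b c ` W = transpose b c' ` W" "c \<noteq> c'"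
  have "transpose b c' c = c" using assms(3) c by (intro transpose_apply_other) auto
  then have "c \<in> transpose b c' ` W \<longleftrightarrow> P"
    using assms(1) c by (simp add: in_transpose_image_iff)
  moreover have "c \<in> transpose b c ` W \<longleftrightarrow> \<not> P"
    using assms(2) by (simp add: in_transpose_image_iff)
  ultimately show False using c(3) by simp
qed

text \<open>Among the infinitely many atoms outside S, infinitely many lie on one side of W; transposing
  them with an atom on the other side gives infinitely many distinct images of W.\<close>

lemma swap_supports_if_finite_swap_orbit:
  assumes "infinite (UNIV :: 'a set)" "finite S"
    and fin: "finite {transpose a b ` W | a b. a \<notin> S \<and> b \<notin> S}"
  shows "swap_supports (set_act atom_act) S (W :: 'a set)"
proof (rule ccontr)
  assume "\<not> swap_supports (set_act atom_act) S W"
  then obtain p q where pq: "p \<notin> S" "q \<notin> S" "p \<in> W" "q \<notin> W"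
    unfolding swap_supports_def set_act_def atom_act_def by (metis image_ident transpose_image_eq)
  define G where "G = - (S \<union> {p, q})"
  have "infinite G" unfolding G_def using assms(1,2) by (simp add: Compl_eq_Diff_UNIV)
  define P where "P = infinite (G \<inter> W)"
  define C where "C = {c \<in> G. c \<in> W \<longleftrightarrow> P}"
  have "infinite C"
  proof (cases P)
    case False
    then have "C = G - (G \<inter> W)" unfolding C_def by blast
    then show ?thesis using \<open>infinite G\<close> False unfolding P_def by simp
  qed (simp add: C_def P_def Int_def)
  define t where "t = (if P then q else p)"
  have "inj_on (\<lambda>c. transpose t c ` W) C"
    by (rule inj_on_transpose_image[where P = P]) (simp_all add: t_def C_def G_def pq)
  moreover have "(\<lambda>c. transpose t c ` W) ` C \<subseteq> {transpose a b ` W | a b. a \<notin> S \<and> b \<notin> S}"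
  proof (rule image_subsetI)
    fix c assume "c \<in> C"
    then have "t \<notin> S" "c \<notin> S" using pq by (simp_all add: t_def C_def G_def)
    then show "transpose t c ` W \<in> {transpose a b ` W | a b. a \<notin> S \<and> b \<notin> S}" by blast
  qed
  ultimately show False using \<open>infinite C\<close> fin by (meson finite_imageD finite_subset)
qed

lemma finite_swap_supported_finite_families:
  assumes "infinite (UNIV :: 'a set)" "finite S"
  shows "finite {\<Y> \<in> pfin (UNIV :: 'a set set). swap_supports (set_act (set_act atom_act)) S \<Y>}"
proof (rule finite_subset)
  let ?\<W> = "{W :: 'a set. swap_supports (set_act atom_act) S W}"
  show "{\<Y> \<in> pfin UNIV. swap_supports (set_act (set_act atom_act)) S \<Y>} \<subseteq> Pow ?\<W>"
  proof clarify
    fix \<Y> W assume \<Y>: "\<Y> \<in> pfin UNIV" "swap_supports (set_act (set_act atom_act)) S \<Y>" "W \<in> \<Y>"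
    have "{transpose a b ` W | a b. a \<notin> S \<and> b \<notin> S} \<subseteq> \<Y>"
      using \<Y>(2,3) unfolding swap_supports_def set_act_def atom_act_def by (auto simp: image_ident)
    then show "swap_supports (set_act atom_act) S W"
      using \<Y>(1) assms by (intro swap_supports_if_finite_swap_orbit) (auto simp: pfin_def intro: finite_subset)
  qed
  show "finite (Pow ?\<W>)" using finite_swap_supported_atom_sets[OF assms] by simp
qed

lemma swap_supports_atom_act_iff:
  assumes "infinite (UNIV :: 'a set)" "finite S"
  shows "swap_supports atom_act S (p :: 'a) \<longleftrightarrow> p \<in> S"
proof
  assume p: "swap_supports atom_act S p"
  obtain b where "b \<notin> insert p S" using ex_new_if_finite assms by (meson finite_insert)
  then show "p \<in> S" using p by (auto simp: swap_supports_def atom_act_def)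
qed (auto simp: swap_supports_def atom_act_def transpose_def)

lemma swap_supports_tuple_act_iff:
  "swap_supports tuple_act S xs \<longleftrightarrow> (\<forall>x \<in> set xs. swap_supports atom_act S x)"
  by (auto simp: swap_supports_def tuple_act_def atom_act_def map_idI map_eq_conv[of _ xs id, simplified])

lemma swap_supported_fun_equivariant:
  assumes "swap_supports (fun_act atom_act actY) S f" "a \<notin> S" "b \<notin> S"
  shows "f (transpose a b x) = actY (transpose a b) (f x)"
proof -
  have "fun_act atom_act actY (transpose a b) f (transpose a b x) = f (transpose a b x)"
    using assms by (simp add: swap_supports_def)
  then show ?thesis by (simp add: fun_act_def atom_act_def)
qed

text \<open>An invariant function is determined by its values on S and one fresh atom x, since
  f z = (x z) \<cdot> f x for every other atom z; these values are invariant outside S \<union> {x}.\<close>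

lemma finite_swap_supported_fs_funs:
  assumes "infinite (UNIV :: 'a set)" "finite S"
    and cod: "\<And>T. finite T \<Longrightarrow> finite {v \<in> V. swap_supports actY T v}"
  shows "finite {f \<in> fs_funs (UNIV :: 'a set) atom_act V actY. swap_supports (fun_act atom_act actY) S f}"
    (is "finite ?F")
proof -
  obtain x :: 'a where x: "x \<notin> S" using ex_new_if_finite assms by blast
  let ?T = "insert x S"
  have outside: "f z = actY (transpose x z) (f x)" if "f \<in> ?F" "z \<notin> ?T" for f z
    using swap_supported_fun_equivariant[of actY S f x z x] that x by simp
  have "inj_on (\<lambda>f. restrict f ?T) ?F"
  proof (rule inj_onI)
    fix f g assume fg: "f \<in> ?F" "g \<in> ?F" "restrict f ?T = restrict g ?T"
    then have "f z = g z" if "z \<in> ?T" for z using that by (metis restrict_apply')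
    moreover have "f z = g z" if "z \<notin> ?T" for z
      using outside[OF fg(1) that] outside[OF fg(2) that] calculation[of x] by simp
    ultimately show "f = g" by blast
  qed
  moreover have "(\<lambda>f. restrict f ?T) ` ?F \<subseteq> (\<Pi>\<^sub>E z\<in>?T. {v \<in> V. swap_supports actY ?T v})"
  proof (rule image_subsetI)
    fix f assume "f \<in> ?F"
    have "swap_supports actY ?T (f z)" if "z \<in> ?T" for z
      unfolding swap_supports_def
    proof (intro allI impI)
      fix a b assume "a \<notin> ?T" "b \<notin> ?T"
      then have "transpose a b z = z" using \<open>z \<in> ?T\<close> by (intro transpose_apply_other) auto
      then show "actY (transpose a b) (f z) = f z"
        using swap_supported_fun_equivariant[of actY S f a b z] \<open>f \<in> ?F\<close> \<open>a \<notin> ?T\<close> \<open>b \<notin> ?T\<close> by simp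
    qed
    then show "restrict f ?T \<in> (\<Pi>\<^sub>E z\<in>?T. {v \<in> V. swap_supports actY ?T v})"
      using \<open>f \<in> ?F\<close> by (auto simp: fs_funs_def)
  qed
  moreover have "finite (\<Pi>\<^sub>E z\<in>?T. {v \<in> V. swap_supports actY ?T v})"
    using assms(2) cod by (intro finite_PiE) auto
  ultimately show ?thesis by (meson finite_imageD finite_subset)
qed

lemma finite_swap_supported_distinct_lists:
  assumes "infinite (UNIV :: 'a set)" "finite S"
  shows "finite {xs \<in> (Tfin_A :: 'a list set). swap_supports tuple_act S xs}"
  by (rule finite_subset[OF _ finite_subset_distinct[OF assms(2)]])
    (auto simp: Tfin_A_def swap_supports_tuple_act_iff swap_supports_atom_act_iff[OF assms])

theorem mainTheorem17:
  assumes "infinite (UNIV :: 'a set)"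
  shows
   "infinite (UNIV :: 'a set) \<and> infinite (UNIV :: ('a + 'a) set) \<and> infinite (UNIV :: ('a \<times> 'a) set)
    \<and> \<not> FSM_Mostowski_infinite (atom_act :: ('a \<Rightarrow> 'a) \<Rightarrow> 'a \<Rightarrow> 'a) UNIV
    \<and> \<not> FSM_Mostowski_infinite (sum_act (atom_act :: ('a \<Rightarrow> 'a) \<Rightarrow> 'a \<Rightarrow> 'a) atom_act) UNIV
    \<and> \<not> FSM_Mostowski_infinite (prod_act (atom_act :: ('a \<Rightarrow> 'a) \<Rightarrow> 'a \<Rightarrow> 'a) atom_act) UNIV
    \<and> \<not> FSM_Tarski_II_infinite (atom_act :: ('a \<Rightarrow> 'a) \<Rightarrow> 'a \<Rightarrow> 'a) UNIV
    \<and> \<not> FSM_Tarski_II_infinite (sum_act (atom_act :: ('a \<Rightarrow> 'a) \<Rightarrow> 'a \<Rightarrow> 'a) atom_act) UNIV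
    \<and> \<not> FSM_Tarski_II_infinite (prod_act (atom_act :: ('a \<Rightarrow> 'a) \<Rightarrow> 'a \<Rightarrow> 'a) atom_act) UNIV
    \<and> \<not> FSM_Mostowski_infinite (set_act (atom_act :: ('a \<Rightarrow> 'a) \<Rightarrow> 'a \<Rightarrow> 'a)) (pfin UNIV)
    \<and> \<not> FSM_Mostowski_infinite (set_act (atom_act :: ('a \<Rightarrow> 'a) \<Rightarrow> 'a \<Rightarrow> 'a)) pcofin_A
    \<and> \<not> FSM_Mostowski_infinite (set_act (atom_act :: ('a \<Rightarrow> 'a) \<Rightarrow> 'a \<Rightarrow> 'a)) pfs_A
    \<and> \<not> FSM_Mostowski_infinite (set_act (set_act (atom_act :: ('a \<Rightarrow> 'a) \<Rightarrow> 'a \<Rightarrow> 'a))) (pfin pfs_A)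
    \<and> \<not> FSM_Mostowski_infinite (fun_act (atom_act :: ('a \<Rightarrow> 'a) \<Rightarrow> 'a \<Rightarrow> 'a) atom_act)
          (fs_funs UNIV atom_act UNIV atom_act)
    \<and> \<not> FSM_Mostowski_infinite (fun_act (atom_act :: ('a \<Rightarrow> 'a) \<Rightarrow> 'a \<Rightarrow> 'a) tuple_act)
          (fs_funs UNIV atom_act Tfin_A tuple_act)
    \<and> \<not> FSM_Mostowski_infinite (fun_act (atom_act :: ('a \<Rightarrow> 'a) \<Rightarrow> 'a \<Rightarrow> 'a) (set_act atom_act))
          (fs_funs UNIV atom_act pfs_A (set_act atom_act))"
proof -
  note inf = assms
  have atom_sets: "finite {W \<in> \<W>. swap_supports (set_act atom_act) S W}"
    if "finite S" for S :: "'a set" and \<W>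
    by (rule finite_subset[OF _ finite_swap_supported_atom_sets[OF inf that]]) blast
  have atom_families: "finite {\<Y> \<in> pfin pfs_A. swap_supports (set_act (set_act atom_act)) S \<Y>}"
    if "finite S" for S :: "'a set"
    by (rule finite_subset[OF _ finite_swap_supported_finite_families[OF inf that]]) (auto simp: pfin_def)
  have invs: "swap_involutive (sum_act atom_act atom_act)" "swap_involutive (prod_act atom_act atom_act)"
    "swap_involutive (set_act atom_act)" "swap_involutive (set_act (set_act atom_act))"
    by (simp_all add: swap_involutive_sum_act swap_involutive_prod_act swap_involutive_set_act
        swap_involutive_atom_act)
  show ?thesis
    using inf finite_swap_supported_elements[OF finite_swap_supported_atom_sets[OF inf]]
      finite_swap_supported_elements[OF finite_swap_supported_sum_sets[OF inf]]
      finite_swap_supported_elements[OF finite_swap_supported_prod_sets[OF inf]]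
      finite_swap_supported_atom_sets[OF inf] finite_swap_supported_sum_sets[OF inf]
      finite_swap_supported_prod_sets[OF inf] swap_supports_atom_act_iff[OF inf]
      finite_swap_supported_distinct_lists[OF inf]
    by (simp add: finite_prod not_FSM_Mostowski_infinite not_FSM_Tarski_II_infinite
        swap_involutive_atom_act swap_involutive_tuple_act swap_involutive_fun_act invs atom_sets
        atom_families finite_swap_supported_fs_funs)
qed

end
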